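(* Let $2<p<6$. Then $\mathsf N(1,p)=1$ and the function $\theta\mapsto\mathsf N(\theta,p)$ is decreasing on $(\vartheta(p,2),1]$.
   Context: $\vartheta(p,2)=\frac{p-2}{p}$. For $\theta\in(\vartheta(p,2),1]$ let $q^*(\theta,p)=\frac{2p\theta}{2-p(1-\theta)}$ and, for $\theta\in(0,1]$, $p>2$, $\Lambda>0$, $\mathsf K^*_{\rm CKN}(\theta,p,\Lambda)=\big[\tfrac{2p\theta+2-p}{(p-2)^2}\big]^{\frac{p-2}{2p}}\big[\tfrac{2p\theta}{2p\theta+2-p}\big]^{\theta}\big[\tfrac{p+2}{4}\big]^{\frac{6-p}{2p}}\Big[\tfrac{\sqrt\pi\,\Gamma(\frac2{p-2})}{\Gamma(\frac2{p-2}+\frac12)}\Big]^{\frac{p-2}{p}}\Lambda^{\theta-\frac{p-2}{2p}}$. Define $\mathsf N(\theta,p)=\mathsf K^*_{\rm CKN}(\theta,p,1)^{1/\theta}\big/\mathsf K^*_{\rm CKN}(1,q^*(\theta,p),1)$. *)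

theory Defs
  imports "HOL-Analysis.Analysis"
begin

definition vartheta2 :: "real \<Rightarrow> real" where
  "vartheta2 p = (p - 2) / p"

definition qstar :: "real \<Rightarrow> real \<Rightarrow> real" where
  "qstar \<theta> p = 2 * p * \<theta> / (2 - p * (1 - \<theta>))"

definition KCKN :: "real \<Rightarrow> real \<Rightarrow> real \<Rightarrow> real" where
  "KCKN \<theta> p \<Lambda> =
     ((2*p*\<theta> + 2 - p) / (p - 2)^2) powr ((p - 2) / (2*p))
   * (2*p*\<theta> / (2*p*\<theta> + 2 - p)) powr \<theta>
   * ((p + 2) / 4) powr ((6 - p) / (2*p))
   * (sqrt pi * Gamma (2 / (p - 2)) / Gamma (2 / (p - 2) + 1/2)) powr ((p - 2) / p)
   * \<Lambda> powr (\<theta> - (p - 2) / (2*p))"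

definition NN :: "real \<Rightarrow> real \<Rightarrow> real" where
  "NN \<theta> p = KCKN \<theta> p 1 powr (1 / \<theta>) / KCKN 1 (qstar \<theta> p) 1"

end

theory Submission
  imports Defs "HOL-Real_Asymp.Real_Asymp"
begin

(* Put m = 2/(p-2), so that p = 2(m+1)/m, and t = (m+1)\<theta>. Then every base and exponent in
   K*_CKN(\<theta>,p,1) is explicit in m and t, and
     ln K*_CKN(\<theta>,p,1) = \<theta> (\<phi>(m)/t + \<tau>(t)),
     \<phi>(x) = ln x / 2 + (x - 1/2) ln ((2x+1)/(2x)) + ln (sqrt pi \<Gamma>(x) / \<Gamma>(x+1/2)),
   with \<tau> depending on t only. Since 2/(q*(\<theta>,p) - 2) = t - 1, the \<tau>-terms cancel in N and
   ln N(\<theta>,p) = (\<phi>(m) - \<phi>(t-1))/t. So N(1,p) = 1, and N decreases in \<theta> because \<phi> is strictly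
   increasing on (0,\<infinity>): its increments \<phi>(x+1) - \<phi>(x) strictly decrease in x, while \<phi>(x+n) tends
   to the same limit ln (sqrt pi) + 1/2 for every x > 0, by Euler's product for \<Gamma>. *)

lemma pos_not_nonpos_Ints: "(x::real) > 0 \<Longrightarrow> x \<notin> \<int>\<^sub>\<le>\<^sub>0"
  using nonpos_Ints_nonpos[of x] by force

lemma Gamma_series_half_shift_ratio:
  fixes x :: real
  assumes "x > 0" "n > 0"
  shows "Gamma_series (x + 1/2) n / Gamma_series x n
         = sqrt (real n) * pochhammer x (Suc n) / pochhammer (x + 1/2) (Suc n)"
proof -
  have "exp ((x + 1/2) * ln (real n)) = exp (x * ln (real n)) * sqrt (real n)"
    using assms by (simp add: distrib_right exp_add exp_ln_iff powr_half_sqrt[symmetric] powr_def)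
  moreover have "pochhammer x (Suc n) > 0" "pochhammer (x + 1/2) (Suc n) > 0"
    using assms by (auto intro!: pochhammer_pos)
  ultimately show ?thesis
    unfolding Gamma_series_def by (simp add: field_simps)
qed

lemma Gamma_add_of_nat_real:
  fixes z :: real
  assumes "z > 0"
  shows "Gamma (z + real n) = pochhammer z n * Gamma z"
  using pochhammer_Gamma[OF pos_not_nonpos_Ints[OF assms], of n] Gamma_real_pos[OF assms]
  by (simp add: field_simps)

lemma sqrt_mult_Gamma_ratio_LIMSEQ:
  fixes x :: real
  assumes "x > 0"
  shows "(\<lambda>n. sqrt (x + real n) * Gamma (x + real n) / Gamma (x + real n + 1/2)) \<longlonglongrightarrow> 1"
proof -
  have Gamma_pos: "Gamma x > 0" "Gamma (x + 1/2) > 0"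
    using assms by simp_all
  define approx where "approx n = Gamma x / Gamma (x + 1/2) * (Gamma_series (x + 1/2) n / Gamma_series x n)
      * (sqrt ((x + real n) / real n) * ((x + real n + 1/2) / (x + real n)))" for n
  have approx_eq: "approx n = sqrt (x + real n) * Gamma (x + real n) / Gamma (x + real n + 1/2)"
    if "n > 0" for n
  proof -
    have "Gamma_series (x + 1/2) n / Gamma_series x n
        = sqrt (real n) * (pochhammer x n * (x + real n)) / (pochhammer (x + 1/2) n * (x + real n + 1/2))"
      using Gamma_series_half_shift_ratio[OF assms that] by (simp add: pochhammer_Suc add_ac)
    moreover have "Gamma (x + real n + 1/2) = pochhammer (x + 1/2) n * Gamma (x + 1/2)"
      using Gamma_add_of_nat_real[of "x + 1/2" n] assms by (simp add: add_ac)
    moreover have "sqrt ((x + real n) / real n) = sqrt (x + real n) / sqrt (real n)"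
      by (simp add: real_sqrt_divide)
    moreover have "pochhammer x n > 0" "pochhammer (x + 1/2) n > 0" "sqrt (real n) > 0"
      "x + real n > 0" "x + real n + 1/2 > 0"
      using assms that by (auto intro!: pochhammer_pos)
    moreover have "G / H * (r * (P * a) / (Q * b)) * (sa / r * (b / a)) = sa * (P * G) / (Q * H)"
      if "P > 0" "Q > 0" "G > 0" "H > 0" "r > 0" "a > 0" "b > 0" for P Q G H r a b sa :: real
      using that by (simp add: field_simps)
    ultimately show ?thesis
      unfolding approx_def Gamma_add_of_nat_real[OF assms] using Gamma_pos by simp
  qed
  have "(\<lambda>n. sqrt ((x + real n) / real n) * ((x + real n + 1/2) / (x + real n))) \<longlonglongrightarrow> 1"
    using assms by real_asymp
  then have "approx \<longlonglongrightarrow> Gamma x / Gamma (x + 1/2) * (Gamma (x + 1/2) / Gamma x) * 1"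
    unfolding approx_def using Gamma_pos by (intro tendsto_intros) auto
  then have "approx \<longlonglongrightarrow> 1"
    using Gamma_pos by simp
  then show ?thesis
    by (rule Lim_transform_eventually)
      (use eventually_gt_at_top[of 0] in \<open>eventually_elim, simp add: approx_eq\<close>)
qed

lemma strict_mono_by_antitone_increments:
  fixes f d :: "real \<Rightarrow> real"
  assumes step: "\<And>x. x > 0 \<Longrightarrow> f (x + 1) = f x + d x"
    and antitone: "\<And>x y. 0 < x \<Longrightarrow> x < y \<Longrightarrow> d y < d x"
    and limit: "\<And>x. x > 0 \<Longrightarrow> (\<lambda>n. f (x + real n)) \<longlonglongrightarrow> L"
    and "0 < x" "x < y"
  shows "f x < f y"
proof -
  have telescope: "f (z + real n) = f z + (\<Sum>k<n. d (z + real k))" if "z > 0" for z n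
  proof (induction n)
    case (Suc n)
    have "f (z + real (Suc n)) = f (z + real n + 1)" by (simp add: add_ac)
    also have "\<dots> = f (z + real n) + d (z + real n)" using that by (intro step) simp
    finally show ?case using Suc by simp
  qed simp
  define S where "S n = (\<Sum>k<n. d (x + real k) - d (y + real k))" for n
  have "S = (\<lambda>n. (f y - f x) + (f (x + real n) - f (y + real n)))"
    unfolding S_def sum_subtractf using telescope[of x] telescope[of y] assms by (intro ext) simp
  moreover have "(\<lambda>n. (f y - f x) + (f (x + real n) - f (y + real n))) \<longlonglongrightarrow> (f y - f x) + (L - L)"
    using assms by (intro tendsto_intros limit) auto
  ultimately have "S \<longlonglongrightarrow> f y - f x" by simp
  moreover have "\<forall>\<^sub>F n in sequentially. d x - d y \<le> S n"
  proof (rule eventually_sequentiallyI)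
    fix n :: nat assume "n \<ge> 1"
    then have "(\<lambda>k. d (x + real k) - d (y + real k)) 0 \<le> S n"
      unfolding S_def using assms by (intro member_le_sum) (auto intro: less_imp_le antitone)
    then show "d x - d y \<le> S n" by simp
  qed
  ultimately have "d x - d y \<le> f y - f x"
    by (rule tendsto_lowerbound) simp
  with antitone[OF assms(4,5)] show ?thesis by linarith
qed

definition gamma_ratio :: "real \<Rightarrow> real" where
  "gamma_ratio x = sqrt pi * Gamma x / Gamma (x + 1/2)"

definition phi :: "real \<Rightarrow> real" where
  "phi x = ln x / 2 + (x - 1/2) * ln ((2*x + 1) / (2*x)) + ln (gamma_ratio x)"

definition phi_increment :: "real \<Rightarrow> real" where
  "phi_increment x = (ln (x + 1) - ln x) / 2 + (x + 1/2) * (ln (2*x + 3) - ln (2*x + 2))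
     - (x - 1/2) * (ln (2*x + 1) - ln (2*x)) + ln x - ln (x + 1/2)"

lemma gamma_ratio_pos: "x > 0 \<Longrightarrow> gamma_ratio x > 0"
  unfolding gamma_ratio_def by simp

lemma gamma_ratio_plus1:
  assumes "x > 0"
  shows "gamma_ratio (x + 1) = gamma_ratio x * (x / (x + 1/2))"
proof -
  have "Gamma (x + 1) = x * Gamma x"
    using Gamma_plus1[OF pos_not_nonpos_Ints[OF assms]] .
  moreover have "Gamma (x + 1 + 1/2) = (x + 1/2) * Gamma (x + 1/2)"
    using Gamma_plus1[OF pos_not_nonpos_Ints[of "x + 1/2"]] assms by (simp add: add_ac)
  ultimately show ?thesis
    unfolding gamma_ratio_def using assms by (simp only:) (simp add: field_simps)
qed

lemma phi_plus1:
  assumes "x > 0"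
  shows "phi (x + 1) = phi x + phi_increment x"
proof -
  have "ln (gamma_ratio (x + 1)) = ln (gamma_ratio x) + ln x - ln (x + 1/2)"
    using assms gamma_ratio_pos[OF assms] by (simp add: gamma_ratio_plus1 ln_mult ln_div)
  moreover have "ln ((2*(x + 1) + 1) / (2*(x + 1))) = ln (2*x + 3) - ln (2*x + 2)"
    using assms by (simp add: ln_div algebra_simps)
  moreover have "ln ((2*x + 1) / (2*x)) = ln (2*x + 1) - ln (2*x)"
    using assms by (simp add: ln_div)
  ultimately show ?thesis
    unfolding phi_def phi_increment_def by (simp only:) (simp add: field_simps)
qed

lemma phi_increment_has_derivative:
  assumes "x > 0"
  shows "(phi_increment has_real_derivative
           (ln (2*x + 3) - ln (2*x + 2) - ln (2*x + 1) + ln (2*x) + 2 / ((2*x + 2) * (2*x + 3)))) (at x)"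
proof -
  have raw: "(phi_increment has_real_derivative
     ((1/(x + 1) - 1/x) / 2 + ((ln (2*x + 3) - ln (2*x + 2)) + (x + 1/2) * (2/(2*x + 3) - 2/(2*x + 2)))
      - ((ln (2*x + 1) - ln (2*x)) + (x - 1/2) * (2/(2*x + 1) - 2/(2*x))) + 1/x - 1/(x + 1/2))) (at x)"
    unfolding phi_increment_def[abs_def] using assms by (auto intro!: derivative_eq_intros)
  have "(1/(x + 1) - 1/x) / 2 + (x + 1/2) * (2/(2*x + 3) - 2/(2*x + 2))
      - (x - 1/2) * (2/(2*x + 1) - 2/(2*x)) + 1/x - 1/(x + 1/2) = 2 / ((2*x + 2) * (2*x + 3))"
    using assms by (simp add: divide_simps) (simp add: algebra_simps)
  then show ?thesis
    by (intro DERIV_cong[OF raw]) linarith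
qed

lemma phi_increment_strict_antimono:
  assumes "0 < x" "x < y"
  shows "phi_increment y < phi_increment x"
proof (rule DERIV_neg_imp_decreasing[OF assms(2)])
  fix z assume "x \<le> z" "z \<le> y"
  with assms have z: "z > 0" by linarith
  have "ln (2*z + 3) - ln (2*z + 2) - ln (2*z + 1) + ln (2*z)
      = ln ((2*z + 3) * (2*z) / ((2*z + 2) * (2*z + 1)))"
    using z by (simp add: ln_div ln_mult)
  also have "\<dots> \<le> (2*z + 3) * (2*z) / ((2*z + 2) * (2*z + 1)) - 1"
    using z by (intro ln_le_minus_one) simp
  also have "\<dots> = ((2*z + 3) * (2*z) - (2*z + 2) * (2*z + 1)) / ((2*z + 2) * (2*z + 1))"
    using z by (simp add: diff_divide_distrib)
  also have "\<dots> = - 2 / ((2*z + 2) * (2*z + 1))"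
    by (simp add: algebra_simps)
  finally have "ln (2*z + 3) - ln (2*z + 2) - ln (2*z + 1) + ln (2*z) + 2 / ((2*z + 2) * (2*z + 3))
      \<le> 2 / ((2*z + 2) * (2*z + 3)) - 2 / ((2*z + 2) * (2*z + 1))" by linarith
  also have "\<dots> < 0"
    using z by (simp add: divide_strict_left_mono mult_strict_left_mono)
  finally show "\<exists>d. (phi_increment has_real_derivative d) (at z) \<and> d < 0"
    using phi_increment_has_derivative[OF z] by blast
qed

lemma phi_LIMSEQ:
  assumes "x > 0"
  shows "(\<lambda>n. phi (x + real n)) \<longlonglongrightarrow> ln (sqrt pi) + 1/2"
proof -
  have phi_eq: "phi z = ln (sqrt pi) + ln (sqrt z * Gamma z / Gamma (z + 1/2))
      + (z - 1/2) * ln ((2*z + 1) / (2*z))" if "z > 0" for z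
  proof -
    have "ln (sqrt z) + ln (gamma_ratio z) = ln (sqrt z * gamma_ratio z)"
      using that gamma_ratio_pos[OF that] by (simp add: ln_mult)
    also have "\<dots> = ln (sqrt pi * (sqrt z * Gamma z / Gamma (z + 1/2)))"
      unfolding gamma_ratio_def by (simp add: ac_simps)
    also have "\<dots> = ln (sqrt pi) + ln (sqrt z * Gamma z / Gamma (z + 1/2))"
      using that by (intro ln_mult_pos) simp_all
    finally have "ln (sqrt z) + ln (gamma_ratio z) = ln (sqrt pi) + ln (sqrt z * Gamma z / Gamma (z + 1/2))" .
    then show ?thesis
      unfolding phi_def using that by (simp add: ln_sqrt)
  qed
  have "(\<lambda>n. (x + real n - 1/2) * ln ((2*(x + real n) + 1) / (2*(x + real n)))) \<longlonglongrightarrow> 1/2"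
    using assms by (real_asymp simp: field_simps)
  then have "(\<lambda>n. ln (sqrt pi) + ln (sqrt (x + real n) * Gamma (x + real n) / Gamma (x + real n + 1/2))
      + (x + real n - 1/2) * ln ((2*(x + real n) + 1) / (2*(x + real n)))) \<longlonglongrightarrow> ln (sqrt pi) + ln 1 + 1/2"
    by (intro tendsto_intros sqrt_mult_Gamma_ratio_LIMSEQ assms) auto
  then show ?thesis
    using assms by (simp add: phi_eq)
qed

lemma phi_strict_mono:
  assumes "0 < x" "x < y"
  shows "phi x < phi y"
  using phi_plus1 phi_increment_strict_antimono phi_LIMSEQ assms
  by (rule strict_mono_by_antitone_increments)

definition log_K_tail :: "real \<Rightarrow> real" where
  "log_K_tail t = ln ((2*t - 1) / 2) / (2*t) + ln (2*t / (2*t - 1))"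

lemma ln_KCKN:
  assumes p: "p = 2 * (m + 1) / m" and m: "m > 0" and t: "2 * ((m + 1) * \<theta>) > 1"
  shows "KCKN \<theta> p 1 > 0"
    and "ln (KCKN \<theta> p 1) = \<theta> * (phi m / ((m + 1) * \<theta>) + log_K_tail ((m + 1) * \<theta>))"
proof -
  define t where "t = (m + 1) * \<theta>"
  have "2*t > 1" using t unfolding t_def .
  have base1: "(2*p*\<theta> + 2 - p) / (p - 2)^2 = m * (2*t - 1) / 2"
    unfolding p t_def using m by (simp add: field_simps power2_eq_square)
  have base2: "2*p*\<theta> / (2*p*\<theta> + 2 - p) = 2*t / (2*t - 1)"
  proof -
    have num: "2*p*\<theta> = 4*t / m" and den: "2*p*\<theta> + 2 - p = 2 * (2*t - 1) / m"
      unfolding p t_def using m by (simp_all add: field_simps)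
    show ?thesis unfolding den unfolding num using m \<open>2*t > 1\<close> by (simp add: field_simps)
  qed
  have base3: "(p + 2) / 4 = (2*m + 1) / (2*m)"
    unfolding p using m by (simp add: field_simps)
  have base4: "sqrt pi * Gamma (2 / (p - 2)) / Gamma (2 / (p - 2) + 1/2) = gamma_ratio m"
    unfolding gamma_ratio_def p using m by (simp add: field_simps)
  have exps: "(p - 2) / (2*p) = 1 / (2 * (m + 1))" "(p - 2) / p = 1 / (m + 1)"
    unfolding p using m by (simp_all add: field_simps)
  have exp3: "(6 - p) / (2*p) = (2*m - 1) / (2 * (m + 1))"
  proof -
    have num: "6 - p = (4*m - 2) / m" and den: "2*p = 4 * (m + 1) / m"
      unfolding p using m by (simp_all add: field_simps)
    show ?thesis unfolding num den using m by (simp add: divide_simps) (simp add: algebra_simps)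
  qed
  have K: "KCKN \<theta> p 1 = (m * (2*t - 1) / 2) powr (1 / (2 * (m + 1))) * (2*t / (2*t - 1)) powr \<theta>
      * ((2*m + 1) / (2*m)) powr ((2*m - 1) / (2 * (m + 1))) * gamma_ratio m powr (1 / (m + 1))"
    unfolding KCKN_def base1 base2 base3 base4 exps exp3 by simp
  have pos: "m * (2*t - 1) / 2 > 0" "2*t / (2*t - 1) > 0" "(2*m + 1) / (2*m) > 0" "gamma_ratio m > 0"
    using m \<open>2*t > 1\<close> gamma_ratio_pos[OF m] by auto
  then show "KCKN \<theta> p 1 > 0"
    unfolding K by (intro mult_pos_pos) auto
  have "ln (KCKN \<theta> p 1) = (ln m + ln ((2*t - 1) / 2)) / (2 * (m + 1)) + \<theta> * ln (2*t / (2*t - 1))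
      + (2*m - 1) / (2 * (m + 1)) * ln ((2*m + 1) / (2*m)) + ln (gamma_ratio m) / (m + 1)"
    unfolding K using pos m \<open>2*t > 1\<close> by (simp add: ln_mult ln_powr ln_div)
  also have "\<dots> = \<theta> * (phi m / t + log_K_tail t)"
  proof -
    have \<theta>_eq: "\<theta> = t / (m + 1)" unfolding t_def using m by simp
    show ?thesis
      unfolding phi_def log_K_tail_def \<theta>_eq using m \<open>2*t > 1\<close>
      by (simp add: divide_simps) (simp add: algebra_simps)
  qed
  finally show "ln (KCKN \<theta> p 1) = \<theta> * (phi m / ((m + 1) * \<theta>) + log_K_tail ((m + 1) * \<theta>))"
    unfolding t_def .
qed

lemma vartheta2_less_iff:
  assumes "p > 2"
  shows "vartheta2 p < \<theta> \<longleftrightarrow> (2 / (p - 2) + 1) * \<theta> > 1"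
proof -
  have "2 / (p - 2) + 1 = p / (p - 2)" using assms by (simp add: field_simps)
  then show ?thesis unfolding vartheta2_def using assms by (simp add: field_simps)
qed

lemma NN_eq_exp:
  assumes p: "p > 2" and \<theta>: "vartheta2 p < \<theta>"
  shows "NN \<theta> p = exp ((phi (2 / (p - 2)) - phi ((2 / (p - 2) + 1) * \<theta> - 1)) / ((2 / (p - 2) + 1) * \<theta>))"
proof -
  define m where "m = 2 / (p - 2)"
  define s where "s = (m + 1) * \<theta> - 1"
  have m: "m > 0" and p_eq: "p = 2 * (m + 1) / m"
    unfolding m_def using p by (simp_all add: field_simps)
  have t: "(m + 1) * \<theta> > 1"
    using vartheta2_less_iff[OF p] \<theta> unfolding m_def by simp
  then have s: "s > 0" and t_eq: "(m + 1) * \<theta> = s + 1"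
    unfolding s_def by simp_all
  have "\<theta> > 0"
    using zero_less_mult_pos[of "m + 1" \<theta>] t m by linarith
  have q_eq: "qstar \<theta> p = 2 * (s + 1) / s"
  proof -
    have den: "2 - p * (1 - \<theta>) = 2 * s / m" and num: "2 * p * \<theta> = 4 * (s + 1) / m"
      unfolding p_eq s_def using m by (simp_all add: field_simps)
    show ?thesis unfolding qstar_def den num using m s by (simp add: field_simps)
  qed
  have "2 * ((m + 1) * \<theta>) > 1" "2 * ((s + 1) * 1) > 1"
    using t s by simp_all
  note K\<theta> = ln_KCKN[OF p_eq m this(1), unfolded t_eq]
    and K1 = ln_KCKN[OF q_eq s this(2), simplified]
  have "NN \<theta> p > 0"
    unfolding NN_def using K\<theta>(1) K1(1) by simp
  have "ln (NN \<theta> p) = ln (KCKN \<theta> p 1) / \<theta> - ln (KCKN 1 (qstar \<theta> p) 1)"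
    unfolding NN_def using K\<theta>(1) K1(1) by (simp add: ln_div ln_powr)
  also have "\<dots> = (phi m - phi s) / (s + 1)"
    unfolding K\<theta>(2) K1(2) using \<open>\<theta> > 0\<close> by (simp add: diff_divide_distrib)
  finally have "NN \<theta> p = exp ((phi m - phi s) / (s + 1))"
    using \<open>NN \<theta> p > 0\<close> by (metis exp_ln)
  then show ?thesis unfolding s_def m_def by simp
qed

lemma phi_quotient_strict_antimono:
  assumes "0 < s" "s < s'" "s' \<le> m"
  shows "(phi m - phi s') / (s' + 1) < (phi m - phi s) / (s + 1)"
proof -
  have "phi s < phi s'" "phi s' \<le> phi m"
    using assms phi_strict_mono[of s s'] phi_strict_mono[of s' m] by (auto simp: le_less)
  then have "(phi m - phi s') / (s' + 1) \<le> (phi m - phi s') / (s + 1)"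
    using assms by (intro divide_left_mono) auto
  also have "\<dots> < (phi m - phi s) / (s + 1)"
    using assms \<open>phi s < phi s'\<close> by (intro divide_strict_right_mono) auto
  finally show ?thesis .
qed

theorem lemma4:
  fixes p :: real
  assumes "2 < p" and "p < 6"
  shows "NN 1 p = 1 \<and>
         (\<forall>\<theta>1 \<theta>2. vartheta2 p < \<theta>1 \<and> \<theta>1 < \<theta>2 \<and> \<theta>2 \<le> 1 \<longrightarrow> NN \<theta>2 p < NN \<theta>1 p)"
proof -
  define m where "m = 2 / (p - 2)"
  define s where "s \<theta> = (m + 1) * \<theta> - 1" for \<theta>
  have m: "m > 0" unfolding m_def using assms by simp
  have NN: "NN \<theta> p = exp ((phi m - phi (s \<theta>)) / (s \<theta> + 1))" if "vartheta2 p < \<theta>" for \<theta>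
    using NN_eq_exp[OF assms(1) that] unfolding s_def m_def by simp
  have s_pos: "s \<theta> > 0" if "vartheta2 p < \<theta>" for \<theta>
    using vartheta2_less_iff[OF assms(1)] that unfolding s_def m_def by simp
  have "vartheta2 p < 1" unfolding vartheta2_def using assms by simp
  then have "NN 1 p = 1" using NN[of 1] unfolding s_def by simp
  moreover have "NN \<theta>2 p < NN \<theta>1 p" if "vartheta2 p < \<theta>1" "\<theta>1 < \<theta>2" "\<theta>2 \<le> 1" for \<theta>1 \<theta>2
  proof -
    have "s \<theta>2 \<le> s 1"
      unfolding s_def using m that by (intro diff_right_mono mult_left_mono) auto
    then have "s \<theta>2 \<le> m"
      unfolding s_def by simp
    moreover have "s \<theta>1 < s \<theta>2"
      unfolding s_def using m that by simp
    ultimately have "(phi m - phi (s \<theta>2)) / (s \<theta>2 + 1) < (phi m - phi (s \<theta>1)) / (s \<theta>1 + 1)"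
      using s_pos[OF that(1)] by (intro phi_quotient_strict_antimono)
    moreover have "vartheta2 p < \<theta>2" using that by linarith
    ultimately show ?thesis
      using NN that(1) by simp
  qed
  ultimately show ?thesis by blast
qed

end
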